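(* Let $c_1,\dots,c_m \in \mathbb{R}^{n_y}\setminus\{0\}$, $d_1,\dots,d_m\in\mathbb{R}$, and $\mathcal{Y} := \bigcup_{j=1}^m \{ y \mid c_j^\top y \geq d_j\}$. For $y,w\in\mathbb{R}^{n_y}$ let $\mathrm{dist}(y,\mathcal{Y}+w):=\min_{a\in\mathcal{Y}+w}\|y-a\|_2$ and $p_j(y,w) := \frac{d_j - c_j^\top(y-w)}{\|c_j\|_2}$. Let $\alpha\in(0,1)$, let $\mathbb{W}\subseteq\mathbb{R}^{n_y}$, let $\hat w^{(1)},\dots,\hat w^{(N)}\in\mathbb{W}$, let $\nu := \frac1N\sum_{i=1}^N \boldsymbol{\delta}_{\hat w^{(i)}}$, let $\theta>0$, and let $$\mathbb{D} := \{\mu\in\mathcal{P}(\mathbb{W}) \mid W(\mu,\nu)\le\theta\}.$$ Then for every $y\in\mathbb{R}^{n_y}$, $$\sup_{\mu\in\mathbb{D}} \mathrm{CVaR}^\mu_\alpha[\mathrm{dist}(y,\mathcal{Y}+w)] \le \inf_{z\in\mathbb{R}}\ z + \frac{1}{1-\alpha}\sup_{\mu\in\mathbb{D}} \mathbb{E}^\mu\Big[\max\big\{\min_{j=1,\dots,m} p_j(y,w) - z,\, -z,\, 0\big\}\Big],$$ where $w$ is the random variable with distribution $\mu$.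
   Context: $\mathcal{P}(\mathbb{W})$ is the set of Borel probability measures on $\mathbb{W}$, and $\boldsymbol{\delta}_{w}$ is the Dirac measure at $w$. For a random loss $X$ with distribution determined by $\mu$, $\mathrm{CVaR}^\mu_\alpha(X) := \min_{z\in\mathbb{R}} \mathbb{E}^\mu\big[z + \frac{(X-z)^+}{1-\alpha}\big]$ with $(x)^+=\max\{x,0\}$. The Wasserstein distance (of order 1) is $W(\mu,\nu) := \min_{\kappa\in\mathcal{P}(\mathbb{W}^2)}\{\int_{\mathbb{W}^2}\|w-w'\|\,\mathrm{d}\kappa(w,w') \mid \Pi^1\kappa=\mu,\ \Pi^2\kappa=\nu\}$, where $\Pi^i\kappa$ is the $i$th marginal of $\kappa$ and $\|\cdot\|$ is an arbitrary norm on $\mathbb{R}^{n_y}$. *)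

theory Defs
  imports "HOL-Probability.Probability"
begin

definition is_norm_fn :: "('a::real_vector \<Rightarrow> real) \<Rightarrow> bool" where
  "is_norm_fn nrm \<longleftrightarrow>
     (\<forall>x. 0 \<le> nrm x) \<and> (\<forall>x. nrm x = 0 \<longleftrightarrow> x = 0) \<and>
     (\<forall>a x. nrm (a *\<^sub>R x) = \<bar>a\<bar> * nrm x) \<and> (\<forall>x y. nrm (x + y) \<le> nrm x + nrm y)"

definition prob_measures_on :: "'a::topological_space set \<Rightarrow> 'a measure set" where
  "prob_measures_on W = {\<mu>. prob_space \<mu> \<and> sets \<mu> = sets borel \<and> (AE w in \<mu>. w \<in> W)}"

definition couplings :: "'a::topological_space measure \<Rightarrow> 'a measure \<Rightarrow> ('a \<times> 'a) measure set" where
  "couplings \<mu> \<nu> = {\<kappa>. prob_space \<kappa> \<and> sets \<kappa> = sets borel \<and>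
        distr \<kappa> borel fst = \<mu> \<and> distr \<kappa> borel snd = \<nu>}"

definition wasserstein :: "('a::{real_vector,topological_space} \<Rightarrow> real) \<Rightarrow> 'a measure \<Rightarrow> 'a measure \<Rightarrow> ennreal" where
  "wasserstein nrm \<mu> \<nu> = (INF \<kappa>\<in>couplings \<mu> \<nu>. \<integral>\<^sup>+ p. ennreal (nrm (fst p - snd p)) \<partial>\<kappa>)"

definition empirical :: "nat \<Rightarrow> (nat \<Rightarrow> 'a::topological_space) \<Rightarrow> 'a measure" where
  "empirical N wh = measure_of UNIV (sets borel)
      (\<lambda>A. (\<Sum>i\<in>{1..N}. indicator A (wh i)) / of_nat N)"

text \<open>CVaR_alpha^mu(X) = inf_z E^mu[z + (X - z)^+ / (1 - alpha)], as an extended real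
  (the expectation of a function bounded below by z).\<close>
definition CVaR :: "real \<Rightarrow> 'a measure \<Rightarrow> ('a \<Rightarrow> real) \<Rightarrow> ereal" where
  "CVaR \<alpha> \<mu> X = (INF z::real. ereal z +
       ereal (1 / (1 - \<alpha>)) * enn2ereal (\<integral>\<^sup>+ w. ennreal (max (X w - z) 0) \<partial>\<mu>))"

end

theory Submission
  imports Defs
begin

(* The distance from y to the union of the shifted halfspaces is at most the distance to the
   nearest one, the positive part of min_j p_j(y, w).  CVaR is an infimum over the threshold z,
   so for each fixed z it is bounded by the expected excess at z, which the right-hand integrand
   dominates pointwise.  Nothing about the ambiguity set is used: the bound holds for any set of
   measures. *)

lemma infdist_halfspace_le:
  fixes c y :: "'a::real_inner"
  assumes "c \<noteq> 0"
  shows "infdist y {a. c \<bullet> a \<ge> d} \<le> max ((d - c \<bullet> y) / norm c) 0"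
proof -
  define t where "t = max ((d - c \<bullet> y) / norm c) 0"
  define a where "a = y + (t / norm c) *\<^sub>R c"
  have c_pos: "norm c > 0" using assms by simp
  have "c \<bullet> a = c \<bullet> y + t * norm c"
    using c_pos by (simp add: a_def inner_add_right dot_square_norm power2_eq_square)
  moreover have "d - c \<bullet> y \<le> t * norm c"
    using c_pos by (simp add: t_def pos_divide_le_eq max_mult_distrib_right)
  ultimately have "a \<in> {a. c \<bullet> a \<ge> d}" by simp
  moreover have "dist y a = t" using c_pos by (simp add: a_def dist_norm t_def)
  ultimately show ?thesis unfolding t_def by (metis infdist_le)
qed

lemma infdist_Union_halfspaces_le:
  fixes c :: "'i \<Rightarrow> 'a::real_inner" and y :: 'a
  assumes "finite J" "J \<noteq> {}" "\<forall>j\<in>J. c j \<noteq> 0"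
  shows "infdist y (\<Union>j\<in>J. {a. c j \<bullet> a \<ge> d j})
           \<le> max (Min ((\<lambda>j. (d j - c j \<bullet> y) / norm (c j)) ` J)) 0"
proof -
  let ?p = "\<lambda>j. (d j - c j \<bullet> y) / norm (c j)"
  have "Min (?p ` J) \<in> ?p ` J" using assms(1,2) by simp
  then obtain j where j: "j \<in> J" "Min (?p ` J) = ?p j" by auto
  have "c j \<bullet> ((d j / (c j \<bullet> c j)) *\<^sub>R c j) = d j"
    using assms(3) j(1) by simp
  then have "{a. c j \<bullet> a \<ge> d j} \<noteq> {}" by (metis empty_iff mem_Collect_eq order_refl)
  then have "infdist y (\<Union>j\<in>J. {a. c j \<bullet> a \<ge> d j}) \<le> infdist y {a. c j \<bullet> a \<ge> d j}"
    using j(1) by (intro infdist_mono) auto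
  also have "\<dots> \<le> max (?p j) 0"
    using assms(3) j(1) by (intro infdist_halfspace_le) simp
  finally show ?thesis using j(2) by simp
qed

lemma infdist_translation:
  fixes y w :: "'a::real_normed_vector"
  shows "infdist y ((\<lambda>a. a + w) ` S) = infdist (y - w) S"
  by (simp add: infdist_def image_image dist_norm algebra_simps)

lemma CVaR_le_of_excess_le:
  assumes "\<alpha> \<le> 1" "\<And>w. max (X w - z) 0 \<le> f w"
  shows "CVaR \<alpha> \<mu> X \<le> ereal z + ereal (1 / (1 - \<alpha>)) * enn2ereal (\<integral>\<^sup>+ w. ennreal (f w) \<partial>\<mu>)"
proof -
  have "CVaR \<alpha> \<mu> X \<le> ereal z + ereal (1 / (1 - \<alpha>)) *
          enn2ereal (\<integral>\<^sup>+ w. ennreal (max (X w - z) 0) \<partial>\<mu>)"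
    unfolding CVaR_def by (rule INF_lower) simp
  also have "\<dots> \<le> ereal z + ereal (1 / (1 - \<alpha>)) * enn2ereal (\<integral>\<^sup>+ w. ennreal (f w) \<partial>\<mu>)"
  proof -
    have "(\<integral>\<^sup>+ w. ennreal (max (X w - z) 0) \<partial>\<mu>) \<le> (\<integral>\<^sup>+ w. ennreal (f w) \<partial>\<mu>)"
      by (intro nn_integral_mono ennreal_leI assms(2))
    then show ?thesis
      using assms(1) by (intro add_left_mono ereal_mult_left_mono) (simp_all add: less_eq_ennreal.rep_eq)
  qed
  finally show ?thesis .
qed

theorem lemma2:
  fixes c :: "nat \<Rightarrow> real ^ 'n" and d :: "nat \<Rightarrow> real" and m :: nat
    and nrm :: "real ^ 'n \<Rightarrow> real"
    and \<alpha> \<theta> :: real and W :: "(real ^ 'n) set" and N :: nat and wh :: "nat \<Rightarrow> real ^ 'n"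
    and y :: "real ^ 'n"
  assumes m_pos: "m \<ge> 1"
    and c_nz: "\<forall>j\<in>{1..m}. c j \<noteq> 0"
    and nrm: "is_norm_fn nrm"
    and alpha: "0 < \<alpha>" "\<alpha> < 1"
    and N_pos: "N \<ge> 1"
    and wh_W: "\<forall>i\<in>{1..N}. wh i \<in> W"
    and theta: "\<theta> > 0"
  shows
   "(let Y = (\<Union>j\<in>{1..m}. {a. c j \<bullet> a \<ge> d j});
         p = (\<lambda>j y w. (d j - c j \<bullet> (y - w)) / norm (c j));
         \<nu> = empirical N wh;
         D = {\<mu> \<in> prob_measures_on W. wasserstein nrm \<mu> \<nu> \<le> ennreal \<theta>}
     in (SUP \<mu>\<in>D. CVaR \<alpha> \<mu> (\<lambda>w. infdist y ((\<lambda>a. a + w) ` Y)))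
        \<le> (INF z::real. ereal z + ereal (1 / (1 - \<alpha>)) *
             (SUP \<mu>\<in>D. enn2ereal (\<integral>\<^sup>+ w. ennreal
                 (max (max (Min ((\<lambda>j. p j y w) ` {1..m}) - z) (- z)) 0) \<partial>\<mu>))))"
  unfolding Let_def
proof (intro SUP_least INF_greatest)
  fix \<mu> z
  let ?D = "{\<mu> \<in> prob_measures_on W. wasserstein nrm \<mu> (empirical N wh) \<le> ennreal \<theta>}"
  let ?X = "\<lambda>w. infdist y ((\<lambda>a. a + w) ` (\<Union>j\<in>{1..m}. {a. c j \<bullet> a \<ge> d j}))"
  let ?f = "\<lambda>w. max (max (Min ((\<lambda>j. (d j - c j \<bullet> (y - w)) / norm (c j)) ` {1..m}) - z) (- z)) 0"
  assume "\<mu> \<in> ?D"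
  have "max (?X w - z) 0 \<le> ?f w" for w
    using infdist_Union_halfspaces_le[of "{1..m}" c "y - w" d] m_pos c_nz
    by (simp add: infdist_translation)
  then have "CVaR \<alpha> \<mu> ?X \<le> ereal z + ereal (1 / (1 - \<alpha>)) * enn2ereal (\<integral>\<^sup>+ w. ennreal (?f w) \<partial>\<mu>)"
    using alpha by (intro CVaR_le_of_excess_le) auto
  also have "\<dots> \<le> ereal z + ereal (1 / (1 - \<alpha>)) * (SUP \<mu>\<in>?D. enn2ereal (\<integral>\<^sup>+ w. ennreal (?f w) \<partial>\<mu>))"
    using alpha \<open>\<mu> \<in> ?D\<close> by (intro add_left_mono ereal_mult_left_mono SUP_upper) auto
  finally show "CVaR \<alpha> \<mu> ?X \<le> ereal z + ereal (1 / (1 - \<alpha>)) *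
      (SUP \<mu>\<in>?D. enn2ereal (\<integral>\<^sup>+ w. ennreal (?f w) \<partial>\<mu>))" .
qed

end
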